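(* Let $G$ be a topological group and $A$ a topological $G$-module. Suppose that for every $p\ge 0$ the augmented column complex $0\to A_c^p(G,A)\xrightarrow{\epsilon}A_{lc}^{p,0}(G,A)\xrightarrow{d_v}A_{lc}^{p,1}(G,A)\xrightarrow{d_v}\cdots$ is exact. Then for every $p\ge 0$ the augmented sub column complex of equivariant cochains $0\to C_c^p(G,A)\xrightarrow{\epsilon}A_{lc}^{p,0}(G,A)^G\xrightarrow{d_v}A_{lc}^{p,1}(G,A)^G\xrightarrow{d_v}\cdots$ is exact as well.
   Context: A topological $G$-module is an abelian topological group $A$ with an action of $G$ by group automorphisms such that the action map $G\times A\to A$ is continuous. For an identity neighbourhood $U$ of $G$ put $\Gamma_U^0:=G$ and, for $q\ge 1$, $\Gamma_U^q:=\{(g_0,\dots,g_q)\in G^{q+1}\mid g_i^{-1}g_j\in U \text{ for all } i,j\}$. $A_c^p(G,A):=C(G^{p+1},A)$ is the group of continuous maps, and $C_c^p(G,A)$ is its subgroup of $G$-equivariant maps, where $G$ acts by $(g.f)(g_0,\dots,g_p)=g.f(g^{-1}g_0,\dots,g^{-1}g_p)$. $A_{lc}^{p,q}(G,A)$ is the group of maps $f\colon G^{p+1}\times G^{q+1}\to A$ whose restriction to $G^{p+1}\times\Gamma_U^q$ is continuous for some identity neighbourhood $U$; $d_v f(\vec x,y_0,\dots,y_{q+1})=(-1)^p\sum_{i=0}^{q+1}(-1)^i f(\vec x,y_0,\dots,\widehat{y_i},\dots,y_{q+1})$. $G$ acts on $A_{lc}^{p,q}(G,A)$ by $(g.f)(\vec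 x,\vec y)=g.f(g^{-1}\vec x,g^{-1}\vec y)$ and $A_{lc}^{p,q}(G,A)^G$ denotes the fixed points. The augmentation is $\epsilon(f)(\vec x,y_0)=f(\vec x)$. *)

theory Defs
  imports "HOL-Analysis.Analysis"
begin

text \<open>The topological group G is the whole type 'g of class
  topological_group_add (additive notation, not necessarily commutative):
  g^{-1} h is written - g + h. Tuples (g_0,...,g_p) in G^{p+1} are extensional
  functions in tup p = PiE {..p} (\<lambda>_. UNIV), carrying the product topology.
  Cochains are represented by functions vanishing outside the relevant tuples.\<close>

definition tup :: "nat \<Rightarrow> (nat \<Rightarrow> 'g) set" where
  "tup p = PiE {..p} (\<lambda>_. UNIV)"

definition tuptop :: "nat \<Rightarrow> (nat \<Rightarrow> 'g::topological_space) topology" where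
  "tuptop p = product_topology (\<lambda>_. euclidean) {..p}"

definition top_G_module :: "('g::topological_group_add \<Rightarrow> 'a::topological_ab_group_add \<Rightarrow> 'a) \<Rightarrow> bool" where
  "top_G_module act \<longleftrightarrow>
     (\<forall>a. act 0 a = a) \<and>
     (\<forall>g h a. act (g + h) a = act g (act h a)) \<and>
     (\<forall>g a b. act g (a + b) = act g a + act g b) \<and>
     continuous_on UNIV (\<lambda>(g, a). act g a)"

definition transl :: "nat \<Rightarrow> 'g::group_add \<Rightarrow> (nat \<Rightarrow> 'g) \<Rightarrow> (nat \<Rightarrow> 'g)" where
  "transl p g x = (\<lambda>i. if i \<le> p then - g + x i else undefined)"

definition Gamma :: "'g::group_add set \<Rightarrow> nat \<Rightarrow> (nat \<Rightarrow> 'g) set" where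
  "Gamma U q = {y \<in> tup q. \<forall>i\<le>q. \<forall>j\<le>q. - y i + y j \<in> U}"

definition Ac :: "nat \<Rightarrow> ((nat \<Rightarrow> 'g::topological_group_add) \<Rightarrow> 'a::topological_ab_group_add) set" where
  "Ac p = {f. continuous_map (tuptop p) euclidean f \<and> (\<forall>x. x \<notin> tup p \<longrightarrow> f x = 0)}"

definition Cc :: "('g::topological_group_add \<Rightarrow> 'a::topological_ab_group_add \<Rightarrow> 'a) \<Rightarrow> nat
     \<Rightarrow> ((nat \<Rightarrow> 'g) \<Rightarrow> 'a) set" where
  "Cc act p = {f \<in> Ac p. \<forall>g. \<forall>x\<in>tup p. act g (f (transl p g x)) = f x}"

definition Alc :: "nat \<Rightarrow> nat \<Rightarrow>
     ((nat \<Rightarrow> 'g::topological_group_add) \<Rightarrow> (nat \<Rightarrow> 'g) \<Rightarrow> 'a::topological_ab_group_add) set" where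
  "Alc p q = {f. (\<exists>U. open U \<and> (0::'g) \<in> U \<and>
        continuous_map (subtopology (prod_topology (tuptop p) (tuptop q)) (tup p \<times> Gamma U q))
          euclidean (\<lambda>(x, y). f x y)) \<and>
      (\<forall>x y. x \<notin> tup p \<or> y \<notin> tup q \<longrightarrow> f x y = 0)}"

definition AlcG :: "('g::topological_group_add \<Rightarrow> 'a::topological_ab_group_add \<Rightarrow> 'a) \<Rightarrow> nat \<Rightarrow> nat
     \<Rightarrow> ((nat \<Rightarrow> 'g) \<Rightarrow> (nat \<Rightarrow> 'g) \<Rightarrow> 'a) set" where
  "AlcG act p q = {f \<in> Alc p q. \<forall>g. \<forall>x\<in>tup p. \<forall>y\<in>tup q.
        act g (f (transl p g x) (transl q g y)) = f x y}"

text \<open>Deleting the i-th entry of a (q+1)+1-tuple, giving a (q+1)-tuple (indices 0..q).\<close>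
definition delete :: "nat \<Rightarrow> nat \<Rightarrow> (nat \<Rightarrow> 'g) \<Rightarrow> (nat \<Rightarrow> 'g)" where
  "delete q i y = (\<lambda>k. if k \<le> q then (if k < i then y k else y (Suc k)) else undefined)"

definition dv :: "nat \<Rightarrow> nat \<Rightarrow> ((nat \<Rightarrow> 'g) \<Rightarrow> (nat \<Rightarrow> 'g) \<Rightarrow> 'a::ab_group_add)
     \<Rightarrow> (nat \<Rightarrow> 'g) \<Rightarrow> (nat \<Rightarrow> 'g) \<Rightarrow> 'a" where
  "dv p q f x y = (if x \<in> tup p \<and> y \<in> tup (Suc q)
     then (\<Sum>i\<le>Suc q. if even (p + i) then f x (delete q i y) else - f x (delete q i y))
     else 0)"

definition aug :: "nat \<Rightarrow> ((nat \<Rightarrow> 'g) \<Rightarrow> 'a::zero) \<Rightarrow> (nat \<Rightarrow> 'g) \<Rightarrow> (nat \<Rightarrow> 'g) \<Rightarrow> 'a" where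
  "aug p f x y = (if x \<in> tup p \<and> y \<in> tup 0 then f x else 0)"

definition aug_exact :: "((nat \<Rightarrow> 'g) \<Rightarrow> 'a::zero) set
     \<Rightarrow> (((nat \<Rightarrow> 'g) \<Rightarrow> 'a) \<Rightarrow> (nat \<Rightarrow> 'g) \<Rightarrow> (nat \<Rightarrow> 'g) \<Rightarrow> 'a)
     \<Rightarrow> (nat \<Rightarrow> ((nat \<Rightarrow> 'g) \<Rightarrow> (nat \<Rightarrow> 'g) \<Rightarrow> 'a) set)
     \<Rightarrow> (nat \<Rightarrow> ((nat \<Rightarrow> 'g) \<Rightarrow> (nat \<Rightarrow> 'g) \<Rightarrow> 'a) \<Rightarrow> (nat \<Rightarrow> 'g) \<Rightarrow> (nat \<Rightarrow> 'g) \<Rightarrow> 'a)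
     \<Rightarrow> bool" where
  "aug_exact C e L d \<longleftrightarrow>
     (\<forall>f\<in>C. e f = (\<lambda>_ _. 0) \<longrightarrow> f = (\<lambda>_. 0)) \<and>
     {f \<in> L 0. d 0 f = (\<lambda>_ _. 0)} = e ` C \<and>
     (\<forall>q. {f \<in> L (Suc q). d (Suc q) f = (\<lambda>_ _. 0)} = d q ` L q)"

end

theory Submission
  imports Defs
begin

text \<open>Twisting a cochain h into (x, y) \<mapsto> x0 . h(x0^-1 x, x0^-1 y) produces an
  equivariant cochain and leaves equivariant ones unchanged. The twist preserves local
  continuity because Gamma_U^q is invariant under left translation, and it commutes with
  d_v because x0 depends only on the horizontal variables. Hence a primitive of an
  equivariant cocycle twists into an equivariant primitive, so exactness passes to the
  subcomplex of invariants.\<close>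

lemma aug_exact_retract:
  assumes exact: "aug_exact C e L d"
    and sub: "C' \<subseteq> C"
    and aug_iff: "\<And>c. c \<in> C \<Longrightarrow> e c \<in> L' 0 \<longleftrightarrow> c \<in> C'"
    and retract: "\<And>q f. f \<in> L q \<Longrightarrow> r q f \<in> L' q"
    and fixed_iff: "\<And>q f. f \<in> L' q \<longleftrightarrow> f \<in> L q \<and> r q f = f"
    and d_retract: "\<And>q h. h \<in> L q \<Longrightarrow> d q (r q h) = r (Suc q) (d q h)"
  shows "aug_exact C' e L' d"
proof -
  have inj: "\<forall>f\<in>C. e f = (\<lambda>_ _. 0) \<longrightarrow> f = (\<lambda>_. 0)"
    and ker0: "f \<in> e ` C \<longleftrightarrow> f \<in> L 0 \<and> d 0 f = (\<lambda>_ _. 0)"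
    and ker: "f \<in> d q ` L q \<longleftrightarrow> f \<in> L (Suc q) \<and> d (Suc q) f = (\<lambda>_ _. 0)" for f q
    using exact unfolding aug_exact_def set_eq_iff mem_Collect_eq by metis+
  have "f \<in> e ` C' \<longleftrightarrow> f \<in> L' 0 \<and> d 0 f = (\<lambda>_ _. 0)" for f
  proof
    assume "f \<in> e ` C'"
    then obtain c where "c \<in> C'" "f = e c" by blast
    then show "f \<in> L' 0 \<and> d 0 f = (\<lambda>_ _. 0)"
      using sub aug_iff ker0 by blast
  next
    assume f: "f \<in> L' 0 \<and> d 0 f = (\<lambda>_ _. 0)"
    then have "f \<in> e ` C" by (simp add: ker0 fixed_iff)
    then obtain c where "c \<in> C" "f = e c" by blast
    then show "f \<in> e ` C'" using f aug_iff by blast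
  qed
  moreover have "f \<in> d q ` L' q \<longleftrightarrow> f \<in> L' (Suc q) \<and> d (Suc q) f = (\<lambda>_ _. 0)" for f q
  proof
    assume "f \<in> d q ` L' q"
    then obtain h where h: "h \<in> L' q" and fh: "f = d q h" by blast
    have hL: "h \<in> L q" "r q h = h" using h by (simp_all add: fixed_iff)
    then have "f \<in> d q ` L q" using fh by blast
    moreover have "r (Suc q) f = f" using d_retract[OF hL(1)] hL(2) fh by simp
    ultimately show "f \<in> L' (Suc q) \<and> d (Suc q) f = (\<lambda>_ _. 0)"
      by (simp add: ker fixed_iff)
  next
    assume f: "f \<in> L' (Suc q) \<and> d (Suc q) f = (\<lambda>_ _. 0)"
    then have "f \<in> d q ` L q" by (simp add: ker fixed_iff)
    then obtain h where h: "h \<in> L q" and fh: "f = d q h" by blast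
    have "d q (r q h) = f"
      using f d_retract[OF h] by (simp add: fixed_iff fh)
    then show "f \<in> d q ` L' q" using retract[OF h] by blast
  qed
  ultimately show ?thesis
    using inj sub unfolding aug_exact_def by blast
qed

lemma topspace_tuptop [simp]: "topspace (tuptop p) = tup p"
  by (simp add: tuptop_def tup_def)

lemma transl_tup: "transl p g x \<in> tup p"
  by (auto simp: tup_def transl_def PiE_iff extensional_def)

lemma transl_transl: "x \<in> tup p \<Longrightarrow> transl p g (transl p h x) = transl p (h + g) x"
  by (auto simp: transl_def fun_eq_iff) (metis add.assoc minus_add)

lemma delete_tup: "delete q i y \<in> tup q"
  by (auto simp: tup_def delete_def PiE_iff extensional_def)

lemma transl_delete: "transl q g (delete q i y) = delete q i (transl (Suc q) g y)"
  by (auto simp: transl_def delete_def)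

lemma Gamma_subset_tup: "Gamma U q \<subseteq> tup q"
  by (auto simp: Gamma_def)

lemma transl_Gamma: "y \<in> Gamma U q \<Longrightarrow> transl q g y \<in> Gamma U q"
  using transl_tup[of q g y]
  by (auto simp: Gamma_def transl_def add.assoc[symmetric] minus_add)

lemma continuous_map_binop:
  assumes "continuous_map X euclidean F" "continuous_map X euclidean H"
    and "continuous_on UNIV (\<lambda>(a, b). \<phi> a b)"
  shows "continuous_map X euclidean (\<lambda>z. \<phi> (F z) (H z))"
proof -
  have "continuous_map X (prod_topology euclidean euclidean) (\<lambda>z. (F z, H z))"
    using assms(1,2) by (rule continuous_map_pairedI)
  then have "continuous_map X euclidean (\<lambda>z. (F z, H z))"
    by simp
  moreover have "continuous_map euclidean euclidean (\<lambda>(a, b). \<phi> a b)"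
    using assms(3) by simp
  ultimately have "continuous_map X euclidean ((\<lambda>(a, b). \<phi> a b) \<circ> (\<lambda>z. (F z, H z)))"
    by (rule continuous_map_compose)
  then show ?thesis
    by (simp add: o_def)
qed

lemma continuous_map_tuptop_component:
  "k \<le> p \<Longrightarrow> continuous_map (tuptop p) euclidean (\<lambda>x. x k)"
  unfolding tuptop_def by (intro continuous_map_product_projection) auto

lemma continuous_map_transl_by_component:
  fixes X :: "'b topology"
  assumes "continuous_map X euclidean (g :: 'b \<Rightarrow> 'g::topological_group_add)"
    and "continuous_map X (tuptop q) F"
  shows "continuous_map X (tuptop q) (\<lambda>z. transl q (g z) (F z))"
  unfolding tuptop_def continuous_map_componentwise
proof (intro conjI ballI)
  show "(\<lambda>z. transl q (g z) (F z)) ` topspace X \<subseteq> extensional {..q}"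
    by (auto simp: transl_def extensional_def)
  fix k assume k: "k \<in> {..q}"
  have component: "continuous_map X euclidean (\<lambda>z. F z k)"
    using continuous_map_compose[OF assms(2) continuous_map_tuptop_component, of k] k
    by (simp add: o_def)
  have "continuous_on UNIV (\<lambda>(a::'g, b). - a + b)"
    unfolding case_prod_beta by (intro continuous_intros)
  then have "continuous_map X euclidean (\<lambda>z. - g z + F z k)"
    by (rule continuous_map_binop[OF assms(1) component])
  then show "continuous_map X euclidean (\<lambda>z. transl q (g z) (F z) k)"
    using k by (simp add: transl_def)
qed

lemma continuous_map_normalize:
  fixes U :: "'g::topological_group_add set" and p q :: nat
  defines "S \<equiv> subtopology (prod_topology (tuptop p) (tuptop q)) (tup p \<times> Gamma U q)"
  shows "continuous_map S S (\<lambda>z. (transl p (fst z 0) (fst z), transl q (fst z 0) (snd z)))"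
proof -
  have fst: "continuous_map S (tuptop p) fst" and snd: "continuous_map S (tuptop q) snd"
    unfolding S_def
    by (auto intro: continuous_map_from_subtopology continuous_map_fst continuous_map_snd)
  have x0: "continuous_map S euclidean (\<lambda>z. fst z 0)"
    using continuous_map_compose[OF fst continuous_map_tuptop_component, of 0]
    by (simp add: o_def)
  have "continuous_map S (prod_topology (tuptop p) (tuptop q))
      (\<lambda>z. (transl p (fst z 0) (fst z), transl q (fst z 0) (snd z)))"
    using continuous_map_transl_by_component[OF x0 fst]
      continuous_map_transl_by_component[OF x0 snd]
    by (simp add: continuous_map_paired)
  moreover have "topspace S = tup p \<times> Gamma U q"
    using Gamma_subset_tup by (auto simp: S_def)
  then have "(\<lambda>z. (transl p (fst z 0) (fst z), transl q (fst z 0) (snd z)))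
      \<in> topspace S \<rightarrow> tup p \<times> Gamma U q"
    by (simp add: Pi_iff mem_Times_iff transl_tup transl_Gamma)
  ultimately show ?thesis
    unfolding S_def continuous_map_in_subtopology by blast
qed

definition twist :: "('g::group_add \<Rightarrow> 'a::zero \<Rightarrow> 'a) \<Rightarrow> nat \<Rightarrow> nat
    \<Rightarrow> ((nat \<Rightarrow> 'g) \<Rightarrow> (nat \<Rightarrow> 'g) \<Rightarrow> 'a) \<Rightarrow> (nat \<Rightarrow> 'g) \<Rightarrow> (nat \<Rightarrow> 'g) \<Rightarrow> 'a" where
  "twist act p q h x y =
     (if x \<in> tup p \<and> y \<in> tup q then act (x 0) (h (transl p (x 0) x) (transl q (x 0) y)) else 0)"

context
  fixes act :: "'g::topological_group_add \<Rightarrow> 'a::topological_ab_group_add \<Rightarrow> 'a"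
  assumes module: "top_G_module act"
begin

lemma act_add: "act g (a + b) = act g a + act g b"
  using module by (simp add: top_G_module_def)

lemma act_act: "act g (act h a) = act (g + h) a"
  using module by (simp add: top_G_module_def)

lemma act_zero: "act g 0 = 0"
  using act_add[of g 0 0] by simp

lemma act_minus: "act g (- a) = - act g a"
proof -
  have "act g a + act g (- a) = 0"
    using act_add[of g a "- a"] by (simp add: act_zero)
  then show ?thesis by (metis minus_unique)
qed

lemma act_sum: "act g (sum f S) = (\<Sum>i\<in>S. act g (f i))"
  by (induction S rule: infinite_finite_induct) (auto simp: act_zero act_add)

lemma twist_equivariant:
  assumes "x \<in> tup p" "y \<in> tup q"
  shows "act g (twist act p q h (transl p g x) (transl q g y)) = twist act p q h x y"
proof -
  have "transl p g x 0 = - g + x 0" by (simp add: transl_def)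
  then show ?thesis
    using assms by (simp add: twist_def transl_tup act_act transl_transl)
qed

lemma twist_Alc:
  assumes "h \<in> Alc p q"
  shows "twist act p q h \<in> Alc p q"
proof -
  obtain U :: "'g set" where U: "open U" "0 \<in> U"
    and h_cont: "continuous_map (subtopology (prod_topology (tuptop p) (tuptop q)) (tup p \<times> Gamma U q))
          euclidean (\<lambda>(x, y). h x y)"
    using assms by (auto simp: Alc_def)
  define S where "S = subtopology (prod_topology (tuptop p :: (nat \<Rightarrow> 'g) topology) (tuptop q))
      (tup p \<times> Gamma U q)"
  have "continuous_map S euclidean (\<lambda>z. fst z 0)"
    unfolding S_def
    by (intro continuous_map_from_subtopology continuous_map_compose[OF continuous_map_fst,
          of _ _ "\<lambda>x. x 0", unfolded o_def] continuous_map_tuptop_component) simp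
  moreover have "continuous_map S euclidean (\<lambda>z. h (transl p (fst z 0) (fst z)) (transl q (fst z 0) (snd z)))"
    using continuous_map_compose[OF continuous_map_normalize h_cont]
    by (simp add: S_def o_def case_prod_beta)
  moreover have "continuous_on UNIV (\<lambda>(g, a). act g a)"
    using module by (simp add: top_G_module_def)
  ultimately have "continuous_map S euclidean
      (\<lambda>z. act (fst z 0) (h (transl p (fst z 0) (fst z)) (transl q (fst z 0) (snd z))))"
    by (rule continuous_map_binop)
  then have "continuous_map S euclidean (\<lambda>(x, y). twist act p q h x y)"
    by (rule continuous_map_eq)
      (auto simp: S_def twist_def dest: subsetD[OF Gamma_subset_tup])
  moreover have "twist act p q h x y = 0" if "x \<notin> tup p \<or> y \<notin> tup q" for x y
    using that by (auto simp: twist_def)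
  ultimately show ?thesis
    using U unfolding Alc_def S_def by blast
qed

lemma twist_AlcG: "h \<in> Alc p q \<Longrightarrow> twist act p q h \<in> AlcG act p q"
  by (simp add: AlcG_def twist_Alc twist_equivariant)

lemma AlcG_iff_twist: "f \<in> AlcG act p q \<longleftrightarrow> f \<in> Alc p q \<and> twist act p q f = f"
proof
  assume f: "f \<in> AlcG act p q"
  have "twist act p q f x y = f x y" for x y
    using f by (cases "x \<in> tup p \<and> y \<in> tup q") (auto simp: twist_def AlcG_def Alc_def)
  then show "f \<in> Alc p q \<and> twist act p q f = f"
    using f by (auto simp: AlcG_def)
next
  assume "f \<in> Alc p q \<and> twist act p q f = f"
  then show "f \<in> AlcG act p q"
    using twist_AlcG by metis
qed

lemma dv_twist: "dv p q (twist act p q h) = twist act p (Suc q) (dv p q h)"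
proof (intro ext)
  fix x y :: "nat \<Rightarrow> 'g"
  show "dv p q (twist act p q h) x y = twist act p (Suc q) (dv p q h) x y"
  proof (cases "x \<in> tup p \<and> y \<in> tup (Suc q)")
    case True
    define x' y' where "x' = transl p (x 0) x" and "y' = transl (Suc q) (x 0) y"
    define summand where "summand i = (if even (p + i) then h x' (delete q i y') else - h x' (delete q i y'))"
      for i
    have twist_delete: "twist act p q h x (delete q i y) = act (x 0) (h x' (delete q i y'))" for i
      using True by (simp add: twist_def x'_def y'_def delete_tup transl_delete)
    have "dv p q (twist act p q h) x y = (\<Sum>i\<le>Suc q. if even (p + i)
        then twist act p q h x (delete q i y) else - twist act p q h x (delete q i y))"
      using True by (simp only: dv_def simp_thms if_True)
    also have "\<dots> = (\<Sum>i\<le>Suc q. act (x 0) (summand i))"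
      by (rule sum.cong) (simp_all add: twist_delete summand_def act_minus)
    also have "\<dots> = act (x 0) (dv p q h x' y')"
      unfolding summand_def x'_def y'_def by (simp add: dv_def transl_tup act_sum del: sum.atMost_Suc)
    also have "\<dots> = twist act p (Suc q) (dv p q h) x y"
      using True by (simp add: twist_def x'_def y'_def)
    finally show ?thesis .
  qed (auto simp: dv_def twist_def)
qed

end

lemma aug_in_AlcG_iff:
  fixes act :: "'g::topological_group_add \<Rightarrow> 'a::topological_ab_group_add \<Rightarrow> 'a"
  assumes "c \<in> Ac p" "aug p c \<in> Alc p 0"
  shows "aug p c \<in> AlcG act p 0 \<longleftrightarrow> c \<in> Cc act p"
proof -
  have "transl 0 0 x \<in> tup 0" for x :: "nat \<Rightarrow> 'g"
    by (rule transl_tup)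
  then have "tup 0 \<noteq> ({} :: (nat \<Rightarrow> 'g) set)"
    by blast
  then have "(\<forall>g. \<forall>x\<in>tup p. \<forall>y\<in>tup 0. act g (aug p c (transl p g x) (transl 0 g y)) = aug p c x y)
      \<longleftrightarrow> (\<forall>g. \<forall>x\<in>tup p. act g (c (transl p g x)) = c x)"
    by (simp add: aug_def transl_tup ex_in_conv)
  then show ?thesis
    using assms unfolding AlcG_def Cc_def by simp
qed

theorem mainTheorem2:
  fixes act :: "'g::topological_group_add \<Rightarrow> 'a::topological_ab_group_add \<Rightarrow> 'a"
  assumes "top_G_module act"
    and "\<forall>p. aug_exact (Ac p :: ((nat \<Rightarrow> 'g) \<Rightarrow> 'a) set) (aug p) (Alc p) (dv p)"
  shows "\<forall>p. aug_exact (Cc act p) (aug p) (AlcG act p) (dv p)"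
proof
  fix p
  have exact: "aug_exact (Ac p :: ((nat \<Rightarrow> 'g) \<Rightarrow> 'a) set) (aug p) (Alc p) (dv p)"
    using assms(2) by blast
  then have aug_Alc: "aug p c \<in> Alc p 0" if "c \<in> Ac p" for c :: "(nat \<Rightarrow> 'g) \<Rightarrow> 'a"
    using that unfolding aug_exact_def by blast
  show "aug_exact (Cc act p) (aug p) (AlcG act p) (dv p)"
  proof (rule aug_exact_retract[OF exact, where r = "twist act p"])
    show "Cc act p \<subseteq> Ac p" by (auto simp: Cc_def)
    show "aug p c \<in> AlcG act p 0 \<longleftrightarrow> c \<in> Cc act p" if "c \<in> Ac p" for c
      using aug_in_AlcG_iff aug_Alc that by blast
    show "twist act p q f \<in> AlcG act p q" if "f \<in> Alc p q" for q f
      using that by (rule twist_AlcG[OF assms(1)])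
    show "f \<in> AlcG act p q \<longleftrightarrow> f \<in> Alc p q \<and> twist act p q f = f" for q f
      by (rule AlcG_iff_twist[OF assms(1)])
    show "dv p q (twist act p q h) = twist act p (Suc q) (dv p q h)" for q h
      by (rule dv_twist[OF assms(1)])
  qed
qed

end
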